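(* Assume (R) and let $n\ge1$ be odd. For all integers $k$ with $(n+1)/2\le k\le n$: $$\sum_{\nu=0}^{k}\binom{2k-n}{k-\nu}s_{n,\nu}=0,\qquad \sum_{\nu=0}^{k}\binom{2k-n}{k-\nu}\binom{n}{\nu}\alpha_{n-\nu,\nu}=0,\qquad \sum_{\nu=0}^{k}\binom{2k-\nu}{k}\binom{n}{\nu}\alpha_{n-\nu}=0.$$
   Context: Let $(\alpha_n)_{n\ge0}$ be an arbitrary sequence of complex numbers with Appell polynomials $A_n(x)=\sum_{\nu=0}^{n}\binom{n}{\nu}\alpha_{n-\nu}x^\nu$; property (R) means $A_n(1-x)=(-1)^nA_n(x)$ for all $n\ge0$. Let $s_{n,k}=\sum_{\nu=k}^{n}\binom{n}{\nu}\binom{\nu}{k}\alpha_\nu$ for $0\le k\le n$ (and $s_{n,\nu}=0$ for $\nu>n$), and $\alpha_{r,s}=\sum_{\nu=0}^{r}\binom{r}{\nu}\alpha_{s+\nu}$ for $r,s\ge0$. Binomial coefficients $\binom{m}{j}$ with integer $m$ are the usual generalized ones, zero for $j<0$. *)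

theory Defs
  imports Complex_Main
begin

definition appell :: "(nat \<Rightarrow> complex) \<Rightarrow> nat \<Rightarrow> complex \<Rightarrow> complex" where
  "appell \<alpha> n x = (\<Sum>\<nu>=0..n. of_nat (n choose \<nu>) * \<alpha> (n - \<nu>) * x ^ \<nu>)"

definition propR :: "(nat \<Rightarrow> complex) \<Rightarrow> bool" where
  "propR \<alpha> \<longleftrightarrow> (\<forall>n x. appell \<alpha> n (1 - x) = (-1) ^ n * appell \<alpha> n x)"

definition s_nk :: "(nat \<Rightarrow> complex) \<Rightarrow> nat \<Rightarrow> nat \<Rightarrow> complex" where
  "s_nk \<alpha> n k = (\<Sum>\<nu>=k..n. of_nat (n choose \<nu>) * of_nat (\<nu> choose k) * \<alpha> \<nu>)"

definition alpha_rs :: "(nat \<Rightarrow> complex) \<Rightarrow> nat \<Rightarrow> nat \<Rightarrow> complex" where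
  "alpha_rs \<alpha> r s = (\<Sum>\<nu>=0..r. of_nat (r choose \<nu>) * \<alpha> (s + \<nu>))"

definition ibinom :: "int \<Rightarrow> int \<Rightarrow> complex" where
  "ibinom m j = (if j < 0 then 0 else (of_int m :: complex) gchoose (nat j))"

end

theory Submission
  imports Defs "HOL-Computational_Algebra.Polynomial"
begin

text \<open>
  Put \<open>d = 2k - n\<close>, \<open>c\<^sub>\<mu> = C(n,\<mu>) \<alpha>\<^sub>\<mu>\<close>, so that \<open>A\<^sub>n(x) = \<Sum> c\<^sub>\<mu> x\<^sup>n\<^sup>-\<^sup>\<mu>\<close>.
  For odd \<open>n\<close>, property (R) says \<open>A\<^sub>n(1/z) + A\<^sub>n(1 - 1/z) = 0\<close>; multiplying by
  \<open>z\<^sup>d\<^sup>+\<^sup>n\<close> with \<open>z = 1 + y\<close> gives the polynomial identity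
  \<open>\<Sum> c\<^sub>\<mu> (1+y)\<^sup>d\<^sup>+\<^sup>\<mu> (1 + y\<^sup>n\<^sup>-\<^sup>\<mu>) = 0\<close>.
  Its coefficient of \<open>y\<^sup>k\<close> is \<open>2 \<Sum> c\<^sub>\<mu> C(d+\<mu>,k)\<close>, because \<open>d + n = 2k\<close> makes
  \<open>C(d+\<mu>, k-(n-\<mu>)) = C(d+\<mu>, k)\<close>. Each of the three sums equals
  \<open>\<Sum> c\<^sub>\<mu> C(d+\<mu>,k)\<close>: the first by Vandermonde's convolution, the second because
  \<open>C(n,\<nu>) \<alpha>\<^sub>n\<^sub>-\<^sub>\<nu>\<^sub>,\<^sub>\<nu> = s\<^sub>n\<^sub>,\<^sub>\<nu>\<close>, the third by reversing the summation.
\<close>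

lemma coeff_binomial_power: "coeff ([:1, 1:] ^ m) i = (of_nat (m choose i) :: 'a::comm_semiring_1)"
proof (cases "i \<le> m")
  case True
  then show ?thesis by (simp add: coeff_linear_poly_power)
next
  case False
  have "degree ([:1::'a, 1:] ^ m) \<le> m"
    using degree_power_le[of "[:1::'a, 1:]" m] by simp
  with False show ?thesis by (simp add: coeff_eq_0 binomial_eq_0)
qed

lemma poly_eq_0_if_finitely_many_nonroots:
  fixes p :: "'a::{idom, ring_char_0} poly"
  assumes "finite {x. poly p x \<noteq> 0}"
  shows "p = 0"
proof (rule ccontr)
  assume "p \<noteq> 0"
  then have "finite ({x. poly p x = 0} \<union> {x. poly p x \<noteq> 0})"
    using assms poly_roots_finite by blast
  moreover have "{x. poly p x = 0} \<union> {x. poly p x \<noteq> 0} = (UNIV :: 'a set)"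
    by blast
  ultimately show False
    using infinite_UNIV_char_0[where 'a = 'a] by simp
qed

lemma sum_choose_eq_0_if_symmetric_identity:
  fixes c :: "nat \<Rightarrow> 'a::{field, ring_char_0}"
  assumes identity: "\<And>y. y \<noteq> -1 \<Longrightarrow> (\<Sum>\<mu>\<le>n. c \<mu> * (1 + y) ^ (d + \<mu>) * (1 + y ^ (n - \<mu>))) = 0"
    and "d + n = 2 * k" and "k \<le> n"
  shows "(\<Sum>\<mu>\<le>n. c \<mu> * of_nat ((d + \<mu>) choose k)) = 0"
proof -
  define P where
    "P = (\<Sum>\<mu>\<le>n. smult (c \<mu>) ([:1, 1:] ^ (d + \<mu>) + monom 1 (n - \<mu>) * [:1, 1:] ^ (d + \<mu>)))"
  have "poly P y = (\<Sum>\<mu>\<le>n. c \<mu> * (1 + y) ^ (d + \<mu>) * (1 + y ^ (n - \<mu>)))" for y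
    by (simp add: P_def poly_sum poly_monom algebra_simps)
  then have "{y. poly P y \<noteq> 0} \<subseteq> {-1}"
    using identity by auto
  then have "P = 0"
    by (intro poly_eq_0_if_finitely_many_nonroots) (meson finite.emptyI finite_insert finite_subset)
  have shifted: "(if k < n - \<mu> then 0 else of_nat ((d + \<mu>) choose (k - (n - \<mu>))) :: 'a)
      = of_nat ((d + \<mu>) choose k)" if "\<mu> \<le> n" for \<mu>
  proof (cases "k < n - \<mu>")
    case True
    then have "d + \<mu> < k" using assms(2) that by linarith
    with True show ?thesis by simp
  next
    case False
    then have "d + \<mu> - (k - (n - \<mu>)) = k" "k - (n - \<mu>) \<le> d + \<mu>"
      using assms(2,3) that by linarith+
    with False show ?thesis by (metis binomial_symmetric)
  qed
  have "coeff P k = (\<Sum>\<mu>\<le>n. c \<mu> * (of_nat ((d + \<mu>) choose k)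
      + (if k < n - \<mu> then 0 else of_nat ((d + \<mu>) choose (k - (n - \<mu>))))))"
    unfolding P_def coeff_sum coeff_smult coeff_add coeff_monom_mult mult_1_left coeff_binomial_power ..
  also have "\<dots> = 2 * (\<Sum>\<mu>\<le>n. c \<mu> * of_nat ((d + \<mu>) choose k))"
    by (simp add: shifted sum_distrib_left algebra_simps)
  finally show ?thesis
    using \<open>P = 0\<close> by simp
qed

lemma appell_reversed: "appell \<alpha> n x = (\<Sum>\<mu>\<le>n. of_nat (n choose \<mu>) * \<alpha> \<mu> * x ^ (n - \<mu>))"
  unfolding appell_def atLeast0AtMost[symmetric]
  by (subst sum.atLeastAtMost_rev) (auto intro!: sum.cong simp: binomial_symmetric[symmetric])

lemma appell_scaled:
  assumes "z \<noteq> 0"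
  shows "z ^ (d + n) * appell \<alpha> n (w / z)
    = (\<Sum>\<mu>\<le>n. of_nat (n choose \<mu>) * \<alpha> \<mu> * w ^ (n - \<mu>) * z ^ (d + \<mu>))"
  unfolding appell_reversed sum_distrib_left
proof (intro sum.cong refl)
  fix \<mu> assume "\<mu> \<in> {..n}"
  then have "z ^ (d + n) = z ^ (d + \<mu>) * z ^ (n - \<mu>)"
    by (simp add: power_add[symmetric])
  with assms show "z ^ (d + n) * (of_nat (n choose \<mu>) * \<alpha> \<mu> * (w / z) ^ (n - \<mu>))
      = of_nat (n choose \<mu>) * \<alpha> \<mu> * w ^ (n - \<mu>) * z ^ (d + \<mu>)"
    by (simp add: power_divide field_simps)
qed

lemma propR_odd_identity:
  assumes "propR \<alpha>" and "odd n" and "y \<noteq> -1"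
  shows "(\<Sum>\<mu>\<le>n. of_nat (n choose \<mu>) * \<alpha> \<mu> * (1 + y) ^ (d + \<mu>) * (1 + y ^ (n - \<mu>))) = 0"
proof -
  define z where "z = 1 + y"
  have "z \<noteq> 0"
    using assms(3) unfolding z_def by (metis add.commute add_eq_0_iff2)
  have "1 - 1 / z = y / z"
    using \<open>z \<noteq> 0\<close> unfolding z_def by (simp add: field_simps)
  then have "appell \<alpha> n (y / z) = - appell \<alpha> n (1 / z)"
    using assms(1,2) unfolding propR_def by (metis power_minus_odd power_one mult_minus1)
  then have "z ^ (d + n) * appell \<alpha> n (1 / z) + z ^ (d + n) * appell \<alpha> n (y / z) = 0"
    by simp
  moreover have "z ^ (d + n) * appell \<alpha> n (1 / z) + z ^ (d + n) * appell \<alpha> n (y / z)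
      = (\<Sum>\<mu>\<le>n. of_nat (n choose \<mu>) * \<alpha> \<mu> * 1 ^ (n - \<mu>) * z ^ (d + \<mu>))
        + (\<Sum>\<mu>\<le>n. of_nat (n choose \<mu>) * \<alpha> \<mu> * y ^ (n - \<mu>) * z ^ (d + \<mu>))"
    by (simp only: appell_scaled[OF \<open>z \<noteq> 0\<close>])
  ultimately show ?thesis
    unfolding z_def by (simp add: sum.distrib[symmetric] algebra_simps)
qed

lemma s_nk_eq_sum_atMost: "s_nk \<alpha> n \<nu> = (\<Sum>\<mu>\<le>n. of_nat (n choose \<mu>) * \<alpha> \<mu> * of_nat (\<mu> choose \<nu>))"
proof -
  have "(\<Sum>\<mu>\<le>n. of_nat (n choose \<mu>) * \<alpha> \<mu> * of_nat (\<mu> choose \<nu>))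
      = (\<Sum>\<mu>\<in>{..n} \<inter> {\<nu>..}. of_nat (n choose \<mu>) * \<alpha> \<mu> * of_nat (\<mu> choose \<nu>))"
    by (intro sum.mono_neutral_right) (auto simp: binomial_eq_0)
  also have "{..n} \<inter> {\<nu>..} = {\<nu>..n}"
    by auto
  finally show ?thesis
    unfolding s_nk_def by (simp add: mult_ac)
qed

lemma sum_binomial_s_nk:
  "(\<Sum>\<nu>\<le>k. of_nat (d choose (k - \<nu>)) * s_nk \<alpha> n \<nu>)
    = (\<Sum>\<mu>\<le>n. of_nat (n choose \<mu>) * \<alpha> \<mu> * of_nat ((d + \<mu>) choose k))"
proof -
  have "(\<Sum>\<nu>\<le>k. of_nat (d choose (k - \<nu>)) * s_nk \<alpha> n \<nu>)
      = (\<Sum>\<mu>\<le>n. of_nat (n choose \<mu>) * \<alpha> \<mu> * (\<Sum>\<nu>\<le>k. of_nat ((\<mu> choose \<nu>) * (d choose (k - \<nu>)))))"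
    unfolding s_nk_eq_sum_atMost sum_distrib_left
    by (subst sum.swap) (simp add: mult_ac)
  also have "\<dots> = (\<Sum>\<mu>\<le>n. of_nat (n choose \<mu>) * \<alpha> \<mu> * of_nat ((d + \<mu>) choose k))"
    by (simp only: of_nat_sum[symmetric] vandermonde add.commute)
  finally show ?thesis .
qed

lemma binomial_mult_alpha_rs:
  assumes "\<nu> \<le> n"
  shows "of_nat (n choose \<nu>) * alpha_rs \<alpha> (n - \<nu>) \<nu> = s_nk \<alpha> n \<nu>"
proof -
  have "of_nat (n choose \<nu>) * alpha_rs \<alpha> (n - \<nu>) \<nu>
      = (\<Sum>j=0..n - \<nu>. of_nat (n choose (j + \<nu>)) * of_nat ((j + \<nu>) choose \<nu>) * \<alpha> (j + \<nu>))"
    unfolding alpha_rs_def sum_distrib_left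
  proof (intro sum.cong refl)
    fix j assume "j \<in> {0..n - \<nu>}"
    then have "(n choose (j + \<nu>)) * ((j + \<nu>) choose \<nu>) = (n choose \<nu>) * ((n - \<nu>) choose j)"
      using choose_mult[of \<nu> "j + \<nu>" n] assms by auto
    then have "of_nat (n choose (j + \<nu>)) * of_nat ((j + \<nu>) choose \<nu>)
        = (of_nat (n choose \<nu>) * of_nat ((n - \<nu>) choose j) :: complex)"
      by (metis of_nat_mult)
    then show "of_nat (n choose \<nu>) * (of_nat (n - \<nu> choose j) * \<alpha> (\<nu> + j))
        = of_nat (n choose (j + \<nu>)) * of_nat (j + \<nu> choose \<nu>) * \<alpha> (j + \<nu>)"
      by (simp add: add.commute mult_ac)
  qed
  also have "\<dots> = s_nk \<alpha> n \<nu>"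
    unfolding s_nk_def using assms
    by (subst sum.shift_bounds_cl_nat_ivl[symmetric]) simp
  finally show ?thesis .
qed

lemma sum_reflected_binomial:
  fixes \<alpha> :: "nat \<Rightarrow> 'a::comm_semiring_1"
  assumes "d + n = 2 * k" and "k \<le> n"
  shows "(\<Sum>\<nu>=0..k. of_nat ((2 * k - \<nu>) choose k) * of_nat (n choose \<nu>) * \<alpha> (n - \<nu>))
    = (\<Sum>\<mu>\<le>n. of_nat (n choose \<mu>) * \<alpha> \<mu> * of_nat ((d + \<mu>) choose k))"
proof -
  have "(\<Sum>\<nu>=0..k. of_nat ((2 * k - \<nu>) choose k) * of_nat (n choose \<nu>) * \<alpha> (n - \<nu>))
      = (\<Sum>\<nu>=0..n. of_nat ((2 * k - \<nu>) choose k) * of_nat (n choose \<nu>) * \<alpha> (n - \<nu>))"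
    using assms by (intro sum.mono_neutral_left) (auto simp: binomial_eq_0)
  also have "\<dots> = (\<Sum>\<mu>\<le>n. of_nat (n choose \<mu>) * \<alpha> \<mu> * of_nat ((d + \<mu>) choose k))"
    unfolding atLeast0AtMost
    using assms by (subst sum.atLeastAtMost_rev[where m = n and n = 0, simplified atLeast0AtMost])
      (auto intro!: sum.cong simp: binomial_symmetric[symmetric] mult_ac)
  finally show ?thesis .
qed

lemma ibinom_of_nat: "ibinom (int m) (int j) = of_nat (m choose j)"
  unfolding ibinom_def by (simp add: binomial_gbinomial)

theorem mainTheorem18:
  fixes \<alpha> :: "nat \<Rightarrow> complex" and n k :: nat
  assumes "propR \<alpha>" and "n \<ge> 1" and "odd n"
    and "(n + 1) div 2 \<le> k" and "k \<le> n"
  shows "(\<Sum>\<nu>=0..k. ibinom (2 * int k - int n) (int k - int \<nu>) * s_nk \<alpha> n \<nu>) = 0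
    \<and> (\<Sum>\<nu>=0..k. ibinom (2 * int k - int n) (int k - int \<nu>) * of_nat (n choose \<nu>)
            * alpha_rs \<alpha> (n - \<nu>) \<nu>) = 0
    \<and> (\<Sum>\<nu>=0..k. ibinom (2 * int k - int \<nu>) (int k) * of_nat (n choose \<nu>) * \<alpha> (n - \<nu>)) = 0"
proof -
  define d where "d = 2 * k - n"
  have "d + n = 2 * k"
    using assms(3,4) unfolding d_def by (auto elim!: oddE)
  have zero: "(\<Sum>\<mu>\<le>n. of_nat (n choose \<mu>) * \<alpha> \<mu> * of_nat ((d + \<mu>) choose k)) = 0"
    using propR_odd_identity[OF assms(1,3)] \<open>d + n = 2 * k\<close> assms(5)
    by (rule sum_choose_eq_0_if_symmetric_identity)
  have "2 * int k - int n = int d"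
    using \<open>d + n = 2 * k\<close> by linarith
  then have first_coeffs: "ibinom (2 * int k - int n) (int k - int \<nu>) = of_nat (d choose (k - \<nu>))"
    if "\<nu> \<le> k" for \<nu>
    using that ibinom_of_nat[of d "k - \<nu>"] by (simp add: of_nat_diff)
  have third_coeffs: "ibinom (2 * int k - int \<nu>) (int k) = of_nat ((2 * k - \<nu>) choose k)"
    if "\<nu> \<le> k" for \<nu>
    using that ibinom_of_nat[of "2 * k - \<nu>" k] by (simp add: of_nat_diff)
  have first: "(\<Sum>\<nu>=0..k. ibinom (2 * int k - int n) (int k - int \<nu>) * s_nk \<alpha> n \<nu>)
      = (\<Sum>\<nu>\<le>k. of_nat (d choose (k - \<nu>)) * s_nk \<alpha> n \<nu>)"
    unfolding atLeast0AtMost by (intro sum.cong) (simp_all add: first_coeffs)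
  have second: "(\<Sum>\<nu>=0..k. ibinom (2 * int k - int n) (int k - int \<nu>) * of_nat (n choose \<nu>)
      * alpha_rs \<alpha> (n - \<nu>) \<nu>) = (\<Sum>\<nu>=0..k. ibinom (2 * int k - int n) (int k - int \<nu>) * s_nk \<alpha> n \<nu>)"
    using assms(5) by (intro sum.cong) (simp_all add: binomial_mult_alpha_rs mult.assoc)
  have third: "(\<Sum>\<nu>=0..k. ibinom (2 * int k - int \<nu>) (int k) * of_nat (n choose \<nu>) * \<alpha> (n - \<nu>))
      = (\<Sum>\<nu>=0..k. of_nat ((2 * k - \<nu>) choose k) * of_nat (n choose \<nu>) * \<alpha> (n - \<nu>))"
    by (intro sum.cong) (simp_all add: third_coeffs)
  show ?thesis
    unfolding second first third sum_binomial_s_nk sum_reflected_binomial[OF \<open>d + n = 2 * k\<close> assms(5)]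
    using zero by simp
qed

end
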